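(* Let $V'$ be a $\mathbb{Z}$-graded vertex algebra and let $V$ be a $\mathbb{Z}$-graded vertex subalgebra of $V'$ such that $V=C_2(V)$. If $V'$ is completely reducible as a weak $V$-module, then $V'=C_2(V')$; in particular $V'$ is $C_2$-cofinite.
   Context: A $\mathbb{Z}$-graded vertex algebra is a vertex algebra $V=\bigoplus_{n\in\mathbb{Z}}V_n$ with a conformal vector $\omega\in V_2$ whose modes $L(n)$ satisfy the Virasoro relations, $L(0)|_{V_n}=n$, and $Y(L(-1)v,z)=\frac{d}{dz}Y(v,z)$. A vertex subalgebra is a subspace containing $\mathbf{1}$ that is itself a vertex algebra under the restricted operations. Modes: $Y(v,z)=\sum_nv_nz^{-n-1}$. $C_2(V)=\mathrm{Span}_{\mathbb{C}}\{u_{-2}v\mid u,v\in V\}$; $V$ is $C_2$-cofinite if $\dim V/C_2(V)<\infty$. A weak module is completely reducible if it is a direct sum of finitely many irreducible weak modules. *)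

theory Defs
  imports Complex_Main
begin

text \<open>A vertex algebra lives on a carrier subspace A of an ambient
complex vector space of type 'v, with scalar multiplication sc.
Modes: Y u n w is u_n w, i.e. Y(u,z) w = sum_n (Y u n w) z^(-n-1).\<close>

definition va_linear :: "(complex \<Rightarrow> 'v::ab_group_add \<Rightarrow> 'v) \<Rightarrow> 'v set
    \<Rightarrow> ('v \<Rightarrow> int \<Rightarrow> 'v \<Rightarrow> 'v) \<Rightarrow> bool" where
  "va_linear sc A Y \<longleftrightarrow>
     (\<forall>u\<in>A. \<forall>u'\<in>A. \<forall>w\<in>A. \<forall>w'\<in>A. \<forall>n. \<forall>c.
        Y u n (w + w') = Y u n w + Y u n w' \<and> Y u n (sc c w) = sc c (Y u n w) \<and>
        Y (u + u') n w = Y u n w + Y u' n w \<and> Y (sc c u) n w = sc c (Y u n w))"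

text \<open>Borcherds (Jacobi) identity, component form; all sums are finite by truncation,
  so we require the partial sums to agree for all sufficiently large cut-offs.\<close>
definition borcherds :: "(complex \<Rightarrow> 'v::ab_group_add \<Rightarrow> 'v) \<Rightarrow> 'v set
    \<Rightarrow> ('v \<Rightarrow> int \<Rightarrow> 'v \<Rightarrow> 'v) \<Rightarrow> bool" where
  "borcherds sc A Y \<longleftrightarrow>
     (\<forall>u\<in>A. \<forall>v\<in>A. \<forall>w\<in>A. \<forall>p q r :: int. \<exists>N::nat. \<forall>M\<ge>N.
        (\<Sum>i<M. sc (of_int p gchoose i) (Y (Y u (r + int i) v) (p + q - int i) w))
      = (\<Sum>i<M. sc ((-1) ^ i * (of_int r gchoose i))
            (Y u (p + r - int i) (Y v (q + int i) w)
             - sc (if even r then 1 else -1) (Y v (q + r - int i) (Y u (p + int i) w)))))"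

definition vertex_algebra_on :: "(complex \<Rightarrow> 'v::ab_group_add \<Rightarrow> 'v) \<Rightarrow> 'v set
    \<Rightarrow> ('v \<Rightarrow> int \<Rightarrow> 'v \<Rightarrow> 'v) \<Rightarrow> 'v \<Rightarrow> bool" where
  "vertex_algebra_on sc A Y vac \<longleftrightarrow>
     vector_space sc \<and> module.subspace sc A \<and> vac \<in> A \<and>
     (\<forall>u\<in>A. \<forall>n. \<forall>w\<in>A. Y u n w \<in> A) \<and>
     va_linear sc A Y \<and>
     (\<forall>u\<in>A. \<forall>w\<in>A. \<exists>N. \<forall>n\<ge>N. Y u n w = 0) \<and>
     (\<forall>w\<in>A. \<forall>n. Y vac n w = (if n = -1 then w else 0)) \<and>
     (\<forall>u\<in>A. Y u (-1) vac = u \<and> (\<forall>n\<ge>0. Y u n vac = 0)) \<and>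
     borcherds sc A Y"

definition Lop :: "('v \<Rightarrow> int \<Rightarrow> 'v \<Rightarrow> 'v) \<Rightarrow> 'v \<Rightarrow> int \<Rightarrow> 'v \<Rightarrow> 'v" where
  "Lop Y om n = Y om (n + 1)"

definition grade :: "(complex \<Rightarrow> 'v::ab_group_add \<Rightarrow> 'v) \<Rightarrow> 'v set
    \<Rightarrow> ('v \<Rightarrow> int \<Rightarrow> 'v \<Rightarrow> 'v) \<Rightarrow> 'v \<Rightarrow> int \<Rightarrow> 'v set" where
  "grade sc A Y om n = {v\<in>A. Lop Y om 0 v = sc (of_int n) v}"

definition graded_va_on :: "(complex \<Rightarrow> 'v::ab_group_add \<Rightarrow> 'v) \<Rightarrow> 'v set
    \<Rightarrow> ('v \<Rightarrow> int \<Rightarrow> 'v \<Rightarrow> 'v) \<Rightarrow> 'v \<Rightarrow> 'v \<Rightarrow> bool" where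
  "graded_va_on sc A Y vac om \<longleftrightarrow>
     vertex_algebra_on sc A Y vac \<and>
     om \<in> grade sc A Y om 2 \<and>
     (\<exists>c::complex. \<forall>m n. \<forall>w\<in>A.
        Lop Y om m (Lop Y om n w) - Lop Y om n (Lop Y om m w)
          = sc (of_int (m - n)) (Lop Y om (m + n) w)
            + (if m + n = 0 then sc ((of_int m ^ 3 - of_int m) / 12 * c) w else 0)) \<and>
     (\<forall>v\<in>A. \<forall>n. \<forall>w\<in>A. Y (Lop Y om (-1) v) n w = sc (- of_int n) (Y v (n - 1) w)) \<and>
     (\<forall>v\<in>A. \<exists>F f. finite F \<and> (\<forall>n\<in>F. f n \<in> grade sc A Y om n) \<and> v = (\<Sum>n\<in>F. f n))"

definition graded_subalgebra :: "(complex \<Rightarrow> 'v::ab_group_add \<Rightarrow> 'v) \<Rightarrow> 'v set \<Rightarrow> 'v set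
    \<Rightarrow> ('v \<Rightarrow> int \<Rightarrow> 'v \<Rightarrow> 'v) \<Rightarrow> 'v \<Rightarrow> bool" where
  "graded_subalgebra sc B A Y vac \<longleftrightarrow>
     B \<subseteq> A \<and> (\<exists>omB. graded_va_on sc B Y vac omB)"

definition C2 :: "(complex \<Rightarrow> 'v::ab_group_add \<Rightarrow> 'v) \<Rightarrow> 'v set
    \<Rightarrow> ('v \<Rightarrow> int \<Rightarrow> 'v \<Rightarrow> 'v) \<Rightarrow> 'v set" where
  "C2 sc A Y = module.span sc {Y u (-2) v | u v. u \<in> A \<and> v \<in> A}"

text \<open>dim A / C_2(A) finite: finitely many vectors together with C_2(A) span A.\<close>
definition C2_cofinite :: "(complex \<Rightarrow> 'v::ab_group_add \<Rightarrow> 'v) \<Rightarrow> 'v set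
    \<Rightarrow> ('v \<Rightarrow> int \<Rightarrow> 'v \<Rightarrow> 'v) \<Rightarrow> bool" where
  "C2_cofinite sc A Y \<longleftrightarrow> (\<exists>S. finite S \<and> S \<subseteq> A \<and> module.span sc (C2 sc A Y \<union> S) = A)"

definition submodule :: "(complex \<Rightarrow> 'v::ab_group_add \<Rightarrow> 'v) \<Rightarrow> 'v set \<Rightarrow> 'v set
    \<Rightarrow> ('v \<Rightarrow> int \<Rightarrow> 'v \<Rightarrow> 'v) \<Rightarrow> 'v set \<Rightarrow> bool" where
  "submodule sc B A Y W \<longleftrightarrow>
     W \<subseteq> A \<and> module.subspace sc W \<and> (\<forall>u\<in>B. \<forall>n. \<forall>w\<in>W. Y u n w \<in> W)"

definition irreducible_submodule :: "(complex \<Rightarrow> 'v::ab_group_add \<Rightarrow> 'v) \<Rightarrow> 'v set \<Rightarrow> 'v set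
    \<Rightarrow> ('v \<Rightarrow> int \<Rightarrow> 'v \<Rightarrow> 'v) \<Rightarrow> 'v set \<Rightarrow> bool" where
  "irreducible_submodule sc B A Y W \<longleftrightarrow>
     submodule sc B A Y W \<and> W \<noteq> {0} \<and>
     (\<forall>W'. submodule sc B A Y W' \<and> W' \<subseteq> W \<longrightarrow> W' = {0} \<or> W' = W)"

definition completely_reducible :: "(complex \<Rightarrow> 'v::ab_group_add \<Rightarrow> 'v) \<Rightarrow> 'v set \<Rightarrow> 'v set
    \<Rightarrow> ('v \<Rightarrow> int \<Rightarrow> 'v \<Rightarrow> 'v) \<Rightarrow> bool" where
  "completely_reducible sc B A Y \<longleftrightarrow>
     (\<exists>k::nat. \<exists>W :: nat \<Rightarrow> 'v set.
        (\<forall>i<k. irreducible_submodule sc B A Y (W i)) \<and>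
        module.span sc (\<Union>i<k. W i) = A \<and>
        (\<forall>i<k. W i \<inter> module.span sc (\<Union>j\<in>{..<k} - {i}. W j) = {0}))"

end

theory Submission
  imports Defs
begin

(* For a vertex algebra on a carrier A, C_2(A) is stable under every
   (-1)-mode: by the commutator formula (the Borcherds identity with r = 0),
     u_(-1) (v_(-2) w) = v_(-2) (u_(-1) w) + sum_i binom(-1,i) (u_i v)_(-3-i) w,
   and in a Z-graded vertex algebra every mode u_(-n) with n >= 2 already lands in C_2(A),
   thanks to the L(-1)-derivative property Y(L(-1)u,z) = d/dz Y(u,z).  Consequently, as soon
   as the vacuum lies in C_2(A), every w = w_(-1) vac lies in C_2(A), i.e. C_2(A) = A.
   For the theorem: V = C_2(V) gives vac in C_2(V), which is contained in C_2(V'), hence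
   V' = C_2(V'), and C_2-cofiniteness is then witnessed by the empty set.  *)

lemma C2_mono:
  assumes "vector_space sc" and "B \<subseteq> A"
  shows "C2 sc B Y \<subseteq> C2 sc A Y"
proof -
  interpret vector_space sc by (rule assms(1))
  show ?thesis
    unfolding C2_def by (rule span_mono) (use assms(2) in blast)
qed

lemma C2_subset_carrier:
  assumes "vertex_algebra_on sc A Y vac"
  shows "C2 sc A Y \<subseteq> A"
proof -
  interpret vector_space sc using assms unfolding vertex_algebra_on_def by blast
  have "subspace A" and "\<forall>u\<in>A. \<forall>n. \<forall>w\<in>A. Y u n w \<in> A"
    using assms unfolding vertex_algebra_on_def by blast+
  then show ?thesis
    unfolding C2_def by (intro span_minimal) auto
qed

text \<open>The commutator formula
  [u_p, v_q] w = sum_i binom(p,i) (u_i v)_(p+q-i) w,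
  i.e. the Borcherds identity specialised to r = 0.\<close>
lemma commutator_formula:
  assumes vs: "vector_space sc" and bor: "borcherds sc A Y"
    and "u \<in> A" "v \<in> A" "w \<in> A"
  shows "\<exists>N. \<forall>M\<ge>N. Y u p (Y v q w) - Y v q (Y u p w)
           = (\<Sum>i<M. sc (of_int p gchoose i) (Y (Y u (int i) v) (p + q - int i) w))"
proof -
  interpret vector_space sc by (rule vs)
  obtain N where N: "\<forall>M\<ge>N.
      (\<Sum>i<M. sc (of_int p gchoose i) (Y (Y u (0 + int i) v) (p + q - int i) w))
    = (\<Sum>i<M. sc ((-1) ^ i * (of_int 0 gchoose i))
          (Y u (p + 0 - int i) (Y v (q + int i) w)
           - sc (if even (0::int) then 1 else -1) (Y v (q + 0 - int i) (Y u (p + int i) w))))"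
    using bor assms(3-5) unfolding borcherds_def by blast
  text \<open>Since binom(0,i) vanishes for i > 0, only the i = 0 term survives on the right.\<close>
  have only_first: "(\<Sum>i<M. sc ((-1) ^ i * (of_int 0 gchoose i))
          (Y u (p + 0 - int i) (Y v (q + int i) w)
           - sc (if even (0::int) then 1 else -1) (Y v (q + 0 - int i) (Y u (p + int i) w))))
      = Y u p (Y v q w) - Y v q (Y u p w)" if "M \<ge> 1" for M
  proof -
    have "(\<Sum>i<M. sc ((-1) ^ i * (of_int 0 gchoose i))
          (Y u (p + 0 - int i) (Y v (q + int i) w)
           - sc (if even (0::int) then 1 else -1) (Y v (q + 0 - int i) (Y u (p + int i) w))))
        = (\<Sum>i<M. if i = 0 then Y u p (Y v q w) - Y v q (Y u p w) else 0)"
      by (rule sum.cong) (auto simp: gbinomial_0_left)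
    also have "\<dots> = Y u p (Y v q w) - Y v q (Y u p w)"
      using that by simp
    finally show ?thesis .
  qed
  show ?thesis
    using N only_first by (intro exI[of _ "max N 1"]) auto
qed

text \<open>In a Z-graded vertex algebra all modes u_(-n), n >= 2, map into C_2: the
  L(-1)-derivative property gives (L(-1) u)_(-n) = n u_(-n-1), so by induction on n each
  u_(-n-1) w is a multiple of the element (L(-1) u)_(-n) w of C_2.\<close>
lemma negative_modes_in_C2:
  assumes gva: "graded_va_on sc A Y vac om" and "2 \<le> n"
  shows "\<forall>u\<in>A. \<forall>w\<in>A. Y u (- int n) w \<in> C2 sc A Y"
proof -
  have va: "vertex_algebra_on sc A Y vac"
    using gva unfolding graded_va_on_def by blast
  interpret vector_space sc using va unfolding vertex_algebra_on_def by blast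
  have derivative: "\<forall>v\<in>A. \<forall>m. \<forall>w\<in>A. Y (Lop Y om (-1) v) m w = sc (- of_int m) (Y v (m - 1) w)"
    using gva unfolding graded_va_on_def by blast
  have L_minus1_closed: "Lop Y om (-1) u \<in> A" if "u \<in> A" for u
    using va gva that unfolding vertex_algebra_on_def graded_va_on_def grade_def Lop_def by blast
  show ?thesis
    using \<open>2 \<le> n\<close>
  proof (induction n rule: dec_induct)
    case base
    show ?case unfolding C2_def by (auto intro: span_base)
  next
    case (step n)
    show ?case
    proof (intro ballI)
      fix u w assume u: "u \<in> A" and w: "w \<in> A"
      have "Y (Lop Y om (-1) u) (- int n) w \<in> C2 sc A Y"
        using step.IH L_minus1_closed u w by blast
      have "Y (Lop Y om (-1) u) (- int n) w = sc (of_nat n) (Y u (- int (Suc n)) w)"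
      proof -
        have "Y (Lop Y om (-1) u) (- int n) w = sc (- of_int (- int n)) (Y u (- int n - 1) w)"
          by (rule derivative[rule_format, OF u w])
        moreover have "- int n - 1 = - int (Suc n)" by simp
        moreover have "(- of_int (- int n) :: complex) = of_nat n" by simp
        ultimately show ?thesis by (simp only:)
      qed
      then have "Y u (- int (Suc n)) w = sc (1 / of_nat n) (Y (Lop Y om (-1) u) (- int n) w)"
        using step.hyps by simp
      also have "\<dots> \<in> C2 sc A Y"
        using \<open>Y (Lop Y om (-1) u) (- int n) w \<in> C2 sc A Y\<close> unfolding C2_def by (rule span_scale)
      finally show "Y u (- int (Suc n)) w \<in> C2 sc A Y" .
    qed
  qed
qed

text \<open>u_(-1) maps each generator v_(-2) w of C_2 into C_2: by the commutator formula,
  u_(-1) (v_(-2) w) differs from v_(-2) (u_(-1) w) by a combination of modes (u_i v)_(-3-i) w.\<close>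
lemma minus1_mode_of_generator_in_C2:
  assumes gva: "graded_va_on sc A Y vac om" and u: "u \<in> A" and v: "v \<in> A" and w: "w \<in> A"
  shows "Y u (-1) (Y v (-2) w) \<in> C2 sc A Y"
proof -
  have va: "vertex_algebra_on sc A Y vac"
    using gva unfolding graded_va_on_def by blast
  interpret vector_space sc using va unfolding vertex_algebra_on_def by blast
  have closed: "\<forall>a\<in>A. \<forall>n. \<forall>b\<in>A. Y a n b \<in> A"
    using va unfolding vertex_algebra_on_def by blast
  obtain N where commutator: "Y u (-1) (Y v (-2) w) - Y v (-2) (Y u (-1) w)
      = (\<Sum>i<N. sc (of_int (-1) gchoose i) (Y (Y u (int i) v) (-1 + -2 - int i) w))"
    using commutator_formula[of sc A Y u v w "-1" "-2"] va u v w
    unfolding vertex_algebra_on_def by blast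
  have "(\<Sum>i<N. sc (of_int (-1) gchoose i) (Y (Y u (int i) v) (-1 + -2 - int i) w)) \<in> C2 sc A Y"
    unfolding C2_def
  proof (rule span_sum)
    fix i
    have "-1 + -2 - int i = - int (3 + i)" by simp
    then have "Y (Y u (int i) v) (-1 + -2 - int i) w \<in> C2 sc A Y"
      using negative_modes_in_C2[OF gva, of "3 + i"] closed u v w by simp
    then show "sc (of_int (-1) gchoose i) (Y (Y u (int i) v) (-1 + -2 - int i) w)
        \<in> span {Y a (-2) b |a b. a \<in> A \<and> b \<in> A}"
      unfolding C2_def by (rule span_scale)
  qed
  moreover have "Y v (-2) (Y u (-1) w) \<in> C2 sc A Y"
    unfolding C2_def using closed u v w by (blast intro: span_base)
  ultimately have "(Y u (-1) (Y v (-2) w) - Y v (-2) (Y u (-1) w)) + Y v (-2) (Y u (-1) w)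
      \<in> C2 sc A Y"
    unfolding C2_def commutator by (rule span_add)
  then show ?thesis by simp
qed

text \<open>C_2 is stable under all (-1)-modes; together with u_(-1) vac = u this is what
  propagates the vacuum through the whole vertex algebra.\<close>
lemma minus1_mode_preserves_C2:
  assumes gva: "graded_va_on sc A Y vac om" and u: "u \<in> A" and x: "x \<in> C2 sc A Y"
  shows "Y u (-1) x \<in> C2 sc A Y"
proof -
  have va: "vertex_algebra_on sc A Y vac"
    using gva unfolding graded_va_on_def by blast
  interpret vector_space sc using va unfolding vertex_algebra_on_def by blast
  have "subspace A" and linear: "va_linear sc A Y"
    using va unfolding vertex_algebra_on_def by blast+
  define P where "P = {y \<in> A. Y u (-1) y \<in> C2 sc A Y}"
  have add: "Y u (-1) (y + z) = Y u (-1) y + Y u (-1) z" if "y \<in> A" "z \<in> A" for y z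
    using linear u that unfolding va_linear_def by blast
  have scale: "Y u (-1) (sc c y) = sc c (Y u (-1) y)" if "y \<in> A" for c y
    using linear u that unfolding va_linear_def by blast
  have "subspace P"
  proof (rule subspaceI)
    show "0 \<in> P"
      using add[of 0 0] \<open>subspace A\<close> subspace_0 unfolding P_def C2_def by (simp add: span_zero)
    show "y + z \<in> P" if "y \<in> P" "z \<in> P" for y z
      using that add \<open>subspace A\<close> unfolding P_def C2_def by (auto intro: subspace_add span_add)
    show "sc c y \<in> P" if "y \<in> P" for c y
      using that scale \<open>subspace A\<close> unfolding P_def C2_def by (auto intro: subspace_scale span_scale)
  qed
  moreover have "{Y a (-2) b |a b. a \<in> A \<and> b \<in> A} \<subseteq> P"
    using minus1_mode_of_generator_in_C2[OF gva u] va
    unfolding P_def vertex_algebra_on_def by blast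
  ultimately have "C2 sc A Y \<subseteq> P"
    unfolding C2_def by (intro span_minimal)
  then show ?thesis
    using x unfolding P_def by blast
qed

text \<open>If the vacuum lies in C_2(A), then C_2(A) exhausts A, since w = w_(-1) vac.\<close>
lemma C2_eq_carrier_if_vacuum_in_C2:
  assumes gva: "graded_va_on sc A Y vac om" and vac: "vac \<in> C2 sc A Y"
  shows "C2 sc A Y = A"
proof
  have va: "vertex_algebra_on sc A Y vac"
    using gva unfolding graded_va_on_def by blast
  then show "C2 sc A Y \<subseteq> A"
    by (rule C2_subset_carrier)
  show "A \<subseteq> C2 sc A Y"
  proof
    fix w assume "w \<in> A"
    then have "w = Y w (-1) vac"
      using va unfolding vertex_algebra_on_def by simp
    also have "\<dots> \<in> C2 sc A Y"
      using minus1_mode_preserves_C2[OF gva \<open>w \<in> A\<close> vac] .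
    finally show "w \<in> C2 sc A Y" .
  qed
qed

lemma C2_cofinite_if_C2_eq_carrier:
  assumes "vector_space sc" and "C2 sc A Y = A"
  shows "C2_cofinite sc A Y"
proof -
  interpret vector_space sc by (rule assms(1))
  have "span (C2 sc A Y \<union> {}) = span (C2 sc A Y)"
    by simp
  also have "\<dots> = C2 sc A Y"
    unfolding C2_def by (rule span_span)
  finally have "span (C2 sc A Y \<union> {}) = A"
    using assms(2) by simp
  then show ?thesis
    unfolding C2_cofinite_def by blast
qed

theorem proposition2p15:
  fixes sc :: "complex \<Rightarrow> 'v::ab_group_add \<Rightarrow> 'v"
    and Y :: "'v \<Rightarrow> int \<Rightarrow> 'v \<Rightarrow> 'v"
    and vac om :: 'v
    and V :: "'v set"
  assumes "graded_va_on sc UNIV Y vac om"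
    and "graded_subalgebra sc V UNIV Y vac"
    and "V = C2 sc V Y"
    and "completely_reducible sc V UNIV Y"
  shows "UNIV = C2 sc UNIV Y \<and> C2_cofinite sc UNIV Y"
proof -
  have vs: "vector_space sc"
    using assms(1) unfolding graded_va_on_def vertex_algebra_on_def by blast
  obtain omB where "graded_va_on sc V Y vac omB"
    using assms(2) unfolding graded_subalgebra_def by blast
  then have "vac \<in> V"
    unfolding graded_va_on_def vertex_algebra_on_def by blast
  also have "V = C2 sc V Y"
    by (rule assms(3))
  also have "\<dots> \<subseteq> C2 sc UNIV Y"
    using C2_mono[OF vs] by blast
  finally have "C2 sc UNIV Y = UNIV"
    by (rule C2_eq_carrier_if_vacuum_in_C2[OF assms(1)])
  moreover have "C2_cofinite sc UNIV Y"
    using C2_cofinite_if_C2_eq_carrier[OF vs] \<open>C2 sc UNIV Y = UNIV\<close> .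
  ultimately show ?thesis
    by simp
qed

end
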